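(* Let $G$ be a finite simple graph on $n\ge 2$ vertices. Then $\alpha(G)=2$ if and only if $\alpha_q(G)=2$.
   Context: $\alpha(G)$ denotes the independence number of $G$. For a finite simple graph $X$ and positive integers $s,d$, a quantum $s$-coclique matrix (in dimension $d$) is a $|V(X)|\times s$ array $P=(P_{vi})_{v\in V(X),\, i\in[s]}$ of orthogonal projections $P_{vi}\in\mathbb{C}^{d\times d}$ such that (a) $\sum_{v\in V(X)}P_{vi}=I_d$ for every $i\in[s]$; (b) $P_{vi}P_{uj}=0$ for all $i\neq j$ in $[s]$ and all adjacent vertices $u\sim v$; (c) $P_{vi}P_{vj}=0$ for all $v\in V(X)$ and all $i\neq j$ in $[s]$. The quantum independence number $\alpha_q(X)$ is the largest $s$ such that a quantum $s$-coclique matrix for $X$ exists for some $d\ge 1$. *)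

theory Defs
  imports "Jordan_Normal_Form.Schur_Decomposition"
begin

definition simple_graph :: "'a set \<Rightarrow> ('a \<Rightarrow> 'a \<Rightarrow> bool) \<Rightarrow> bool" where
  "simple_graph V E \<longleftrightarrow> finite V \<and> (\<forall>u v. E u v \<longrightarrow> u \<in> V \<and> v \<in> V)
     \<and> (\<forall>u v. E u v \<longrightarrow> E v u) \<and> (\<forall>v. \<not> E v v)"

definition independent_set :: "'a set \<Rightarrow> ('a \<Rightarrow> 'a \<Rightarrow> bool) \<Rightarrow> 'a set \<Rightarrow> bool" where
  "independent_set V E S \<longleftrightarrow> S \<subseteq> V \<and> (\<forall>u\<in>S. \<forall>v\<in>S. \<not> E u v)"

definition alpha :: "'a set \<Rightarrow> ('a \<Rightarrow> 'a \<Rightarrow> bool) \<Rightarrow> nat" where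
  "alpha V E = Max (card ` {S. independent_set V E S})"

definition orth_proj :: "nat \<Rightarrow> complex mat \<Rightarrow> bool" where
  "orth_proj d P \<longleftrightarrow> P \<in> carrier_mat d d \<and> P * P = P \<and> mat_adjoint P = P"

definition msum :: "nat \<Rightarrow> 'b set \<Rightarrow> ('b \<Rightarrow> complex mat) \<Rightarrow> complex mat" where
  "msum d A f = mat d d (\<lambda>jk. \<Sum>x\<in>A. f x $$ jk)"

definition quantum_coclique ::
  "'a set \<Rightarrow> ('a \<Rightarrow> 'a \<Rightarrow> bool) \<Rightarrow> nat \<Rightarrow> nat \<Rightarrow> ('a \<Rightarrow> nat \<Rightarrow> complex mat) \<Rightarrow> bool" where
  "quantum_coclique V E s d P \<longleftrightarrow>
     (\<forall>v\<in>V. \<forall>i<s. orth_proj d (P v i))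
   \<and> (\<forall>i<s. msum d V (\<lambda>v. P v i) = 1\<^sub>m d)
   \<and> (\<forall>i<s. \<forall>j<s. \<forall>u\<in>V. \<forall>v\<in>V. i \<noteq> j \<longrightarrow> E u v \<longrightarrow> P v i * P u j = 0\<^sub>m d d)
   \<and> (\<forall>v\<in>V. \<forall>i<s. \<forall>j<s. i \<noteq> j \<longrightarrow> P v i * P v j = 0\<^sub>m d d)"

definition alpha_q :: "'a set \<Rightarrow> ('a \<Rightarrow> 'a \<Rightarrow> bool) \<Rightarrow> nat" where
  "alpha_q V E = (GREATEST s. s \<ge> 1 \<and> (\<exists>d\<ge>1. \<exists>P. quantum_coclique V E s d P))"

end

theory Submission imports Defs begin

text \<open>
  An independent set of size s yields a quantum s-coclique of 0/1 matrices, so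
  alpha(G) \<le> alpha_q(G); taking traces bounds s by |V|, so alpha_q(G) is well defined.
  Conversely, for any two columns i, j of a quantum coclique some product P x i P y j is
  nonzero, because both columns sum to the identity. For i \<noteq> j such a product forces x and y
  to be distinct and nonadjacent, so alpha_q(G) \<ge> 2 gives alpha(G) \<ge> 2. Inserting a third
  column, P x 0 P y 1 = \<Sum>z P x 0 P z 2 P y 1, so some z is distinct from and nonadjacent to
  both x and y: alpha_q(G) \<ge> 3 gives alpha(G) \<ge> 3.
\<close>

lemma msum_carrier_mat [simp]: "msum d X f \<in> carrier_mat d d"
  unfolding msum_def by simp

lemma dim_msum [simp]: "dim_row (msum d X f) = d" "dim_col (msum d X f) = d"
  unfolding msum_def by simp_all

lemma index_msum [simp]:
  "a < d \<Longrightarrow> b < d \<Longrightarrow> msum d X f $$ (a,b) = (\<Sum>x\<in>X. f x $$ (a,b))"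
  unfolding msum_def by simp

lemma index_mult_square_mat:
  assumes "A \<in> carrier_mat d d" "B \<in> carrier_mat d d" "a < d" "b < d"
  shows "(A * B) $$ (a,b) = (\<Sum>k<d. A $$ (a,k) * B $$ (k,b))"
  using assms by (simp add: scalar_prod_def atLeast0LessThan)

lemma mult_msum_distrib_left:
  assumes A: "A \<in> carrier_mat d d" and f: "\<And>x. x \<in> X \<Longrightarrow> f x \<in> carrier_mat d d"
  shows "A * msum d X f = msum d X (\<lambda>x. A * f x)"
proof (rule eq_matI)
  fix a b assume "a < dim_row (msum d X (\<lambda>x. A * f x))" "b < dim_col (msum d X (\<lambda>x. A * f x))"
  then have ab: "a < d" "b < d" by auto
  have "(A * msum d X f) $$ (a,b) = (\<Sum>k<d. A $$ (a,k) * (\<Sum>x\<in>X. f x $$ (k,b)))"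
    using A ab by (subst index_mult_square_mat) auto
  also have "\<dots> = (\<Sum>x\<in>X. \<Sum>k<d. A $$ (a,k) * f x $$ (k,b))"
    by (simp add: sum_distrib_left sum.swap[of _ X])
  also have "\<dots> = msum d X (\<lambda>x. A * f x) $$ (a,b)"
    using ab by simp (intro sum.cong refl, simp add: index_mult_square_mat[OF A f ab])
  finally show "(A * msum d X f) $$ (a,b) = msum d X (\<lambda>x. A * f x) $$ (a,b)" .
qed (use A in auto)

lemma mult_msum_distrib_right:
  assumes B: "B \<in> carrier_mat d d" and f: "\<And>x. x \<in> X \<Longrightarrow> f x \<in> carrier_mat d d"
  shows "msum d X f * B = msum d X (\<lambda>x. f x * B)"
proof (rule eq_matI)
  fix a b assume "a < dim_row (msum d X (\<lambda>x. f x * B))" "b < dim_col (msum d X (\<lambda>x. f x * B))"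
  then have ab: "a < d" "b < d" by auto
  have "(msum d X f * B) $$ (a,b) = (\<Sum>k<d. (\<Sum>x\<in>X. f x $$ (a,k)) * B $$ (k,b))"
    using B ab by (subst index_mult_square_mat) auto
  also have "\<dots> = (\<Sum>x\<in>X. \<Sum>k<d. f x $$ (a,k) * B $$ (k,b))"
    by (simp add: sum_distrib_right sum.swap[of _ X])
  also have "\<dots> = msum d X (\<lambda>x. f x * B) $$ (a,b)"
    using ab by simp (intro sum.cong refl, simp add: index_mult_square_mat[OF f B ab])
  finally show "(msum d X f * B) $$ (a,b) = msum d X (\<lambda>x. f x * B) $$ (a,b)" .
qed (use B in auto)

lemma msum_cong: "(\<And>x. x \<in> X \<Longrightarrow> f x = g x) \<Longrightarrow> msum d X f = msum d X g"
  unfolding msum_def by (metis (no_types, lifting) sum.cong)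

lemma msum_neutral: "(\<And>x. x \<in> X \<Longrightarrow> f x = 0\<^sub>m d d) \<Longrightarrow> msum d X f = 0\<^sub>m d d"
  by (rule eq_matI) auto

lemma msum_eq_single:
  assumes "finite X" "c \<in> X" "\<And>x. x \<in> X \<Longrightarrow> x \<noteq> c \<Longrightarrow> f x = 0\<^sub>m d d"
    and "f c \<in> carrier_mat d d"
  shows "msum d X f = f c"
proof (rule eq_matI)
  fix a b assume "a < dim_row (f c)" "b < dim_col (f c)"
  then have ab: "a < d" "b < d" using assms(4) by auto
  have "(\<Sum>x\<in>X. f x $$ (a,b)) = f c $$ (a,b) + (\<Sum>x\<in>X - {c}. f x $$ (a,b))"
    using assms(1,2) by (simp add: sum.remove)
  also have "(\<Sum>x\<in>X - {c}. f x $$ (a,b)) = 0"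
    using assms(3) ab by (intro sum.neutral) auto
  finally have "(\<Sum>x\<in>X. f x $$ (a,b)) = f c $$ (a,b)" by simp
  with ab show "msum d X f $$ (a,b) = f c $$ (a,b)" by simp
qed (use assms in auto)

lemma dim_mat_adjoint [simp]:
  "dim_row (mat_adjoint A) = dim_col A" "dim_col (mat_adjoint A) = dim_row A"
  unfolding mat_adjoint_def by simp_all

lemma index_mat_adjoint:
  "a < dim_col A \<Longrightarrow> b < dim_row A \<Longrightarrow> mat_adjoint A $$ (a,b) = conjugate (A $$ (b,a))"
  unfolding mat_adjoint_def by (simp add: mat_of_rows_def)

lemma orth_proj_iff_entries:
  "orth_proj d P \<longleftrightarrow> P \<in> carrier_mat d d \<and> P * P = P
     \<and> (\<forall>a<d. \<forall>b<d. P $$ (a,b) = cnj (P $$ (b,a)))"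
proof -
  have "mat_adjoint P = P \<longleftrightarrow> (\<forall>a<d. \<forall>b<d. P $$ (a,b) = cnj (P $$ (b,a)))"
    if P: "P \<in> carrier_mat d d"
  proof
    assume adj: "mat_adjoint P = P"
    show "\<forall>a<d. \<forall>b<d. P $$ (a,b) = cnj (P $$ (b,a))"
    proof (intro allI impI)
      fix a b assume "a < d" "b < d"
      with P have "mat_adjoint P $$ (a,b) = cnj (P $$ (b,a))"
        by (simp add: index_mat_adjoint)
      with adj show "P $$ (a,b) = cnj (P $$ (b,a))" by simp
    qed
  next
    assume herm: "\<forall>a<d. \<forall>b<d. P $$ (a,b) = cnj (P $$ (b,a))"
    show "mat_adjoint P = P"
    proof (rule eq_matI)
      fix a b assume "a < dim_row P" "b < dim_col P"
      with P have ab: "a < d" "b < d" by auto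
      with P have "mat_adjoint P $$ (a,b) = cnj (P $$ (b,a))"
        by (simp add: index_mat_adjoint)
      with herm ab show "mat_adjoint P $$ (a,b) = P $$ (a,b)" by metis
    qed (use P in auto)
  qed
  then show ?thesis
    unfolding orth_proj_def by blast
qed

lemma orth_proj_zero_mat: "orth_proj d (0\<^sub>m d d)"
  by (simp add: orth_proj_iff_entries)

lemma orth_proj_one_mat: "orth_proj d (1\<^sub>m d)"
  by (auto simp: orth_proj_iff_entries)

lemma orth_proj_diag_le_1:
  assumes "orth_proj d P" and a: "a < d"
  shows "Re (P $$ (a,a)) \<le> 1"
proof -
  have P: "P \<in> carrier_mat d d" and idem: "P * P = P"
    and herm: "\<And>a b. a < d \<Longrightarrow> b < d \<Longrightarrow> P $$ (a,b) = cnj (P $$ (b,a))"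
    using assms(1) unfolding orth_proj_iff_entries by blast+
  have "Re (P $$ (a,a)) = Re (\<Sum>k<d. P $$ (a,k) * P $$ (k,a))"
    using P a by (metis idem index_mult_square_mat)
  also have "\<dots> = (\<Sum>k<d. (cmod (P $$ (k,a)))\<^sup>2)"
    unfolding Re_sum
  proof (rule sum.cong[OF refl])
    fix k assume "k \<in> {..<d}"
    then have "P $$ (a,k) * P $$ (k,a) = cnj (P $$ (k,a)) * P $$ (k,a)"
      using herm[of a k] a by simp
    then show "Re (P $$ (a,k) * P $$ (k,a)) = (cmod (P $$ (k,a)))\<^sup>2"
      by (simp only: cmod_power2) (simp add: power2_eq_square)
  qed
  also have "\<dots> \<ge> (cmod (P $$ (a,a)))\<^sup>2"
    using a by (intro member_le_sum) auto
  finally have "(cmod (P $$ (a,a)))\<^sup>2 \<le> Re (P $$ (a,a))" .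
  moreover have "(Re (P $$ (a,a)))\<^sup>2 \<le> (cmod (P $$ (a,a)))\<^sup>2"
    by (simp only: cmod_power2) simp
  ultimately have "(Re (P $$ (a,a)))\<^sup>2 \<le> Re (P $$ (a,a))" by linarith
  then have sq: "Re (P $$ (a,a)) * Re (P $$ (a,a)) \<le> Re (P $$ (a,a)) * 1"
    by (simp add: power2_eq_square)
  show ?thesis
  proof (cases "0 < Re (P $$ (a,a))")
    case True
    then show ?thesis by (rule mult_le_cancel_left_pos[THEN iffD1, OF _ sq])
  qed simp
qed

lemma orth_proj_msum:
  assumes "finite I" and proj: "\<And>i. i \<in> I \<Longrightarrow> orth_proj d (P i)"
    and orth: "\<And>i j. i \<in> I \<Longrightarrow> j \<in> I \<Longrightarrow> i \<noteq> j \<Longrightarrow> P i * P j = 0\<^sub>m d d"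
  shows "orth_proj d (msum d I P)"
  unfolding orth_proj_iff_entries
proof (intro conjI allI impI)
  have carrier: "\<And>i. i \<in> I \<Longrightarrow> P i \<in> carrier_mat d d"
    using proj by (simp add: orth_proj_def)
  have "msum d I P * msum d I P = msum d I (\<lambda>i. P i * msum d I P)"
    using carrier by (intro mult_msum_distrib_right) auto
  also have "\<dots> = msum d I P"
  proof (rule msum_cong)
    fix i assume i: "i \<in> I"
    have "P i * msum d I P = msum d I (\<lambda>j. P i * P j)"
      using i carrier by (intro mult_msum_distrib_left) auto
    also have "\<dots> = P i * P i"
      using i carrier assms(1) orth by (intro msum_eq_single mult_carrier_mat) auto
    also have "\<dots> = P i"
      using proj[OF i] by (simp add: orth_proj_def)
    finally show "P i * msum d I P = P i" .
  qed
  finally show "msum d I P * msum d I P = msum d I P" .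
next
  fix a b assume ab: "a < d" "b < d"
  have "\<And>i. i \<in> I \<Longrightarrow> P i $$ (a,b) = cnj (P i $$ (b,a))"
    using proj ab unfolding orth_proj_iff_entries by blast
  with ab show "msum d I P $$ (a,b) = cnj (msum d I P $$ (b,a))"
    by simp
qed simp

lemma quantum_coclique_orth_proj:
  "quantum_coclique V E s d P \<Longrightarrow> v \<in> V \<Longrightarrow> i < s \<Longrightarrow> orth_proj d (P v i)"
  unfolding quantum_coclique_def by blast

lemma quantum_coclique_carrier_mat:
  assumes "quantum_coclique V E s d P" "v \<in> V" "i < s"
  shows "P v i \<in> carrier_mat d d"
  using quantum_coclique_orth_proj[OF assms] unfolding orth_proj_def by blast

lemma quantum_coclique_msum:
  "quantum_coclique V E s d P \<Longrightarrow> i < s \<Longrightarrow> msum d V (\<lambda>v. P v i) = 1\<^sub>m d"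
  unfolding quantum_coclique_def by blast

lemma quantum_coclique_mult_eq_0:
  assumes "simple_graph V E" "quantum_coclique V E s d P"
    and "u \<in> V" "v \<in> V" "u = v \<or> E u v" "i < s" "j < s" "i \<noteq> j"
  shows "P u i * P v j = 0\<^sub>m d d"
proof -
  have "u = v \<or> E v u"
    using assms(1,5) unfolding simple_graph_def by blast
  with assms(2-4,6-8) show ?thesis
    unfolding quantum_coclique_def by blast
qed

lemma quantum_coclique_card_le:
  assumes qc: "quantum_coclique V E s d P" and "0 < d" "finite V"
  shows "s \<le> card V"
proof -
  define Q where "Q v = msum d {..<s} (P v)" for v
  have "orth_proj d (Q v)" if "v \<in> V" for v
    using qc that unfolding Q_def quantum_coclique_def by (intro orth_proj_msum) auto
  then have Q_le: "Re (Q v $$ (0,0)) \<le> 1" if "v \<in> V" for v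
    using that \<open>0 < d\<close> orth_proj_diag_le_1 by blast
  have "real s = Re (\<Sum>i<s. msum d V (\<lambda>v. P v i) $$ (0,0))"
    using quantum_coclique_msum[OF qc] \<open>0 < d\<close> by simp
  also have "\<dots> = Re (\<Sum>v\<in>V. \<Sum>i<s. P v i $$ (0,0))"
    using \<open>0 < d\<close> by (simp add: sum.swap[of _ V])
  also have "\<dots> = (\<Sum>v\<in>V. Re (Q v $$ (0,0)))"
    unfolding Q_def using \<open>0 < d\<close> by simp
  also have "\<dots> \<le> (\<Sum>v\<in>V. 1)"
    using Q_le by (intro sum_mono) auto
  finally show ?thesis by simp
qed

lemma quantum_coclique_of_independent_set:
  fixes V :: "'a set"
  assumes "finite V" and ind: "independent_set V E I"
  obtains P :: "'a \<Rightarrow> nat \<Rightarrow> complex mat" where "quantum_coclique V E (card I) d P"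
proof -
  have IV: "I \<subseteq> V" and nonadj: "\<And>u v. u \<in> I \<Longrightarrow> v \<in> I \<Longrightarrow> \<not> E u v"
    using ind unfolding independent_set_def by auto
  obtain f where f: "bij_betw f {0..<card I} I"
    using ex_bij_betw_nat_finite finite_subset[OF IV \<open>finite V\<close>] by blast
  then have fI: "\<And>i. i < card I \<Longrightarrow> f i \<in> I"
    and f_inj: "\<And>i j. i < card I \<Longrightarrow> j < card I \<Longrightarrow> f i = f j \<Longrightarrow> i = j"
    unfolding bij_betw_def inj_on_def by auto
  define P :: "'a \<Rightarrow> nat \<Rightarrow> complex mat"
    where "P v i = (if v = f i then 1\<^sub>m d else 0\<^sub>m d d)" for v i
  have "quantum_coclique V E (card I) d P"
    unfolding quantum_coclique_def
  proof (intro conjI ballI allI impI)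
    fix v i assume "v \<in> V" "i < card I"
    show "orth_proj d (P v i)"
      unfolding P_def by (simp add: orth_proj_zero_mat orth_proj_one_mat)
  next
    fix i assume "i < card I"
    then show "msum d V (\<lambda>v. P v i) = 1\<^sub>m d"
      using fI IV \<open>finite V\<close> unfolding P_def by (subst msum_eq_single[of _ "f i"]) auto
  next
    fix i j u v assume "i < card I" "j < card I" "u \<in> V" "v \<in> V" "i \<noteq> j" "E u v"
    then show "P v i * P u j = 0\<^sub>m d d"
      using nonadj fI unfolding P_def by auto
  next
    fix v i j assume "v \<in> V" "i < card I" "j < card I" "i \<noteq> j"
    then show "P v i * P v j = 0\<^sub>m d d"
      using f_inj unfolding P_def by auto
  qed
  then show ?thesis by (rule that)
qed

lemma quantum_coclique_cross_product_nonzero: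
  assumes qc: "quantum_coclique V E s d P" and "0 < d" "i < s" "j < s"
  obtains x y where "x \<in> V" "y \<in> V" "P x i * P y j \<noteq> 0\<^sub>m d d"
proof (rule ccontr)
  assume "\<not> thesis"
  then have zero: "\<And>x y. x \<in> V \<Longrightarrow> y \<in> V \<Longrightarrow> P x i * P y j = 0\<^sub>m d d"
    using that by blast
  have "P x i = 0\<^sub>m d d" if x: "x \<in> V" for x
  proof -
    have carrier: "\<And>y. y \<in> V \<Longrightarrow> P y j \<in> carrier_mat d d" "P x i \<in> carrier_mat d d"
      using quantum_coclique_carrier_mat[OF qc] x assms(3,4) by auto
    then have "P x i = P x i * msum d V (\<lambda>y. P y j)"
      using quantum_coclique_msum[OF qc \<open>j < s\<close>] by simp
    also have "\<dots> = msum d V (\<lambda>y. P x i * P y j)"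
      using carrier by (intro mult_msum_distrib_left)
    also have "\<dots> = 0\<^sub>m d d"
      using zero x by (intro msum_neutral)
    finally show ?thesis .
  qed
  then have "(1\<^sub>m d :: complex mat) = 0\<^sub>m d d"
    using quantum_coclique_msum[OF qc \<open>i < s\<close>] msum_neutral by metis
  then have "(1\<^sub>m d :: complex mat) $$ (0,0) = 0\<^sub>m d d $$ (0,0)" by simp
  with \<open>0 < d\<close> show False by simp
qed

lemma independent_pair_of_quantum_coclique:
  assumes G: "simple_graph V E" and qc: "quantum_coclique V E s d P" and "0 < d" "2 \<le> s"
  shows "\<exists>I. independent_set V E I \<and> card I = 2"
proof -
  obtain x y where xy: "x \<in> V" "y \<in> V" "P x 0 * P y 1 \<noteq> 0\<^sub>m d d"
    using quantum_coclique_cross_product_nonzero[OF qc \<open>0 < d\<close>, of 0 1] \<open>2 \<le> s\<close> by auto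
  then have "x \<noteq> y" "\<not> E x y"
    using quantum_coclique_mult_eq_0[OF G qc, of x y 0 1] \<open>2 \<le> s\<close> by auto
  with xy G have "independent_set V E {x, y} \<and> card {x, y} = 2"
    unfolding independent_set_def simple_graph_def by auto
  then show ?thesis by blast
qed

lemma independent_triple_of_quantum_coclique:
  assumes G: "simple_graph V E" and qc: "quantum_coclique V E s d P" and "0 < d" "3 \<le> s"
  shows "\<exists>I. independent_set V E I \<and> card I = 3"
proof -
  have s: "0 < s" "1 < s" "2 < s" using \<open>3 \<le> s\<close> by auto
  obtain x y where xy: "x \<in> V" "y \<in> V" and nz: "P x 0 * P y 1 \<noteq> 0\<^sub>m d d"
    using quantum_coclique_cross_product_nonzero[OF qc \<open>0 < d\<close> s(1,2)] by blast
  have Px: "P x 0 \<in> carrier_mat d d" and Py: "P y 1 \<in> carrier_mat d d"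
    and Pz: "\<And>z. z \<in> V \<Longrightarrow> P z 2 \<in> carrier_mat d d"
    using quantum_coclique_carrier_mat[OF qc] xy s by auto
  have "P x 0 * P y 1 = P x 0 * (msum d V (\<lambda>z. P z 2) * P y 1)"
    using quantum_coclique_msum[OF qc s(3)] Py by simp
  also have "\<dots> = P x 0 * msum d V (\<lambda>z. P z 2 * P y 1)"
    using Py Pz by (simp add: mult_msum_distrib_right)
  also have "\<dots> = msum d V (\<lambda>z. P x 0 * (P z 2 * P y 1))"
    using Px by (rule mult_msum_distrib_left) (rule mult_carrier_mat[OF Pz Py])
  finally have "msum d V (\<lambda>z. P x 0 * (P z 2 * P y 1)) \<noteq> 0\<^sub>m d d"
    using nz by simp
  then obtain z where z: "z \<in> V" and nz': "P x 0 * (P z 2 * P y 1) \<noteq> 0\<^sub>m d d"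
    using msum_neutral[of V "\<lambda>z. P x 0 * (P z 2 * P y 1)" d] by blast
  have "P x 0 * (P z 2 * P y 1) = P x 0 * P z 2 * P y 1"
    using assoc_mult_mat[OF Px Pz[OF z] Py] by simp
  with nz' Px Py have "P x 0 * P z 2 \<noteq> 0\<^sub>m d d" "P z 2 * P y 1 \<noteq> 0\<^sub>m d d"
    by auto
  with nz have "x \<noteq> y \<and> \<not> E x y" "x \<noteq> z \<and> \<not> E x z" "z \<noteq> y \<and> \<not> E z y"
    using quantum_coclique_mult_eq_0[OF G qc xy _ s(1,2)]
      quantum_coclique_mult_eq_0[OF G qc xy(1) z _ s(1,3)]
      quantum_coclique_mult_eq_0[OF G qc z xy(2) _ s(3,2)]
    by auto
  with xy z G have "independent_set V E {x, y, z} \<and> card {x, y, z} = 3"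
    unfolding independent_set_def simple_graph_def by auto
  then show ?thesis by blast
qed


lemma finite_independent_sets: "finite V \<Longrightarrow> finite {S. independent_set V E S}"
  by (rule finite_subset[of _ "Pow V"]) (auto simp: independent_set_def)

lemma card_le_alpha: "finite V \<Longrightarrow> independent_set V E I \<Longrightarrow> card I \<le> alpha V E"
  unfolding alpha_def by (auto intro: Max_ge finite_independent_sets)

lemma alpha_attained:
  assumes "finite V"
  obtains I where "independent_set V E I" "card I = alpha V E"
proof -
  have fin: "finite (card ` {S. independent_set V E S})"
    using assms by (simp add: finite_independent_sets)
  have "{} \<in> {S. independent_set V E S}"
    by (simp add: independent_set_def)
  then have ne: "card ` {S. independent_set V E S} \<noteq> {}"
    by blast
  have "alpha V E \<in> card ` {S. independent_set V E S}"
    unfolding alpha_def using fin ne by (rule Max_in)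
  then obtain I where "alpha V E = card I" "I \<in> {S. independent_set V E S}"
    by (rule imageE)
  with that show ?thesis by simp
qed

definition has_quantum_coclique :: "'a set \<Rightarrow> ('a \<Rightarrow> 'a \<Rightarrow> bool) \<Rightarrow> nat \<Rightarrow> bool" where
  "has_quantum_coclique V E s \<longleftrightarrow> (\<exists>d\<ge>1. \<exists>P. quantum_coclique V E s d P)"

lemma alpha_q_eq_Greatest:
  "alpha_q V E = (GREATEST s. 1 \<le> s \<and> has_quantum_coclique V E s)"
  unfolding alpha_q_def has_quantum_coclique_def ..

lemma has_quantum_coclique_card_le:
  "finite V \<Longrightarrow> has_quantum_coclique V E s \<Longrightarrow> s \<le> card V"
  unfolding has_quantum_coclique_def using quantum_coclique_card_le by fastforce

lemma has_quantum_coclique_independent_set: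
  "finite V \<Longrightarrow> independent_set V E I \<Longrightarrow> has_quantum_coclique V E (card I)"
  unfolding has_quantum_coclique_def by (metis le_refl quantum_coclique_of_independent_set)

lemma le_alpha_q:
  assumes "finite V" "has_quantum_coclique V E s" "1 \<le> s"
  shows "s \<le> alpha_q V E"
proof -
  have "\<And>t. 1 \<le> t \<and> has_quantum_coclique V E t \<Longrightarrow> t \<le> card V"
    using has_quantum_coclique_card_le[OF assms(1)] by blast
  with conjI[OF assms(3,2)] show ?thesis
    unfolding alpha_q_eq_Greatest by (rule Greatest_le_nat)
qed

lemma has_quantum_coclique_alpha_q:
  assumes G: "simple_graph V E" and "V \<noteq> {}"
  shows "has_quantum_coclique V E (alpha_q V E)"
proof -
  have fin: "finite V" using G by (simp add: simple_graph_def)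
  obtain v where "v \<in> V" using \<open>V \<noteq> {}\<close> by blast
  with G have "independent_set V E {v}"
    unfolding independent_set_def simple_graph_def by auto
  then have "has_quantum_coclique V E 1"
    using has_quantum_coclique_independent_set[OF fin] by fastforce
  then have "1 \<le> (1::nat) \<and> has_quantum_coclique V E 1" by simp
  moreover have "\<And>t. 1 \<le> t \<and> has_quantum_coclique V E t \<Longrightarrow> t \<le> card V"
    using has_quantum_coclique_card_le[OF fin] by blast
  ultimately have "1 \<le> alpha_q V E \<and> has_quantum_coclique V E (alpha_q V E)"
    unfolding alpha_q_eq_Greatest by (rule GreatestI_nat)
  then show ?thesis ..
qed

lemma alpha_le_alpha_q:
  assumes "simple_graph V E"
  shows "alpha V E \<le> alpha_q V E"
proof -
  have fin: "finite V" using assms by (simp add: simple_graph_def)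
  then obtain I where I: "independent_set V E I" "card I = alpha V E"
    by (rule alpha_attained)
  show ?thesis
  proof (cases "alpha V E = 0")
    case False
    with I(2) have "1 \<le> card I" by simp
    with le_alpha_q[OF fin has_quantum_coclique_independent_set[OF fin I(1)]] I(2)
    show ?thesis by simp
  qed simp
qed

lemma two_le_alpha_if_two_le_alpha_q:
  assumes G: "simple_graph V E" and "V \<noteq> {}" and "2 \<le> alpha_q V E"
  shows "2 \<le> alpha V E"
proof -
  have fin: "finite V" using G by (simp add: simple_graph_def)
  obtain d P where "1 \<le> d" and qc: "quantum_coclique V E (alpha_q V E) d P"
    using has_quantum_coclique_alpha_q[OF G \<open>V \<noteq> {}\<close>]
    unfolding has_quantum_coclique_def by blast
  then obtain I where "independent_set V E I" "card I = 2"
    using independent_pair_of_quantum_coclique[OF G qc] \<open>2 \<le> alpha_q V E\<close> by auto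
  then show ?thesis
    using card_le_alpha[OF fin] by fastforce
qed

lemma three_le_alpha_if_three_le_alpha_q:
  assumes G: "simple_graph V E" and "V \<noteq> {}" and "3 \<le> alpha_q V E"
  shows "3 \<le> alpha V E"
proof -
  have fin: "finite V" using G by (simp add: simple_graph_def)
  obtain d P where "1 \<le> d" and qc: "quantum_coclique V E (alpha_q V E) d P"
    using has_quantum_coclique_alpha_q[OF G \<open>V \<noteq> {}\<close>]
    unfolding has_quantum_coclique_def by blast
  then obtain I where "independent_set V E I" "card I = 3"
    using independent_triple_of_quantum_coclique[OF G qc] \<open>3 \<le> alpha_q V E\<close> by auto
  then show ?thesis
    using card_le_alpha[OF fin] by fastforce
qed

theorem mainTheorem7:
  fixes V :: "'a set" and E :: "'a \<Rightarrow> 'a \<Rightarrow> bool"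
  assumes "simple_graph V E" and "card V \<ge> 2"
  shows "alpha V E = 2 \<longleftrightarrow> alpha_q V E = 2"
proof -
  have "V \<noteq> {}" using assms(2) by auto
  have le: "alpha V E \<le> alpha_q V E"
    using assms(1) by (rule alpha_le_alpha_q)
  have ge2: "2 \<le> alpha_q V E \<Longrightarrow> 2 \<le> alpha V E"
    using assms(1) \<open>V \<noteq> {}\<close> by (rule two_le_alpha_if_two_le_alpha_q)
  have ge3: "3 \<le> alpha_q V E \<Longrightarrow> 3 \<le> alpha V E"
    using assms(1) \<open>V \<noteq> {}\<close> by (rule three_le_alpha_if_three_le_alpha_q)
  show ?thesis
  proof
    assume "alpha V E = 2"
    with le ge3 show "alpha_q V E = 2" by (cases "3 \<le> alpha_q V E") auto
  next
    assume "alpha_q V E = 2"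
    with le ge2 show "alpha V E = 2" by auto
  qed
qed

end
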